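(* Let $\mathcal{A}s_3\langle X\rangle$ be the free third-type associative algebra. For all $a,b,c,d\in\mathcal{A}s_3\langle X\rangle$, \[ [[a,b],[c,d]]=[[a,b],\{c,d\}]=[\{a,b\},\{c,d\}]=\{\{a,b\},[c,d]\}=\{[a,b],[c,d]\}=0 \] and \[ [[[a,b],c],d]=\{[[a,b],c],d\}=[\{[a,b],c\},d]=[[\{a,b\},c],d]=[\{\{a,b\},c\},d]=\{[\{a,b\},c],d\}=\{\{[a,b],c\},d\}=0. \]
   Context: An associative algebra is called of the third type if it satisfies $abc+bac-bca-cba=0$ for all $a,b,c$. $\mathcal{A}s_3\langle X\rangle$ is the free algebra of this variety on a countable set $X$ over a field of characteristic $0$. Here $[a,b]=ab-ba$ is the commutator and $\{a,b\}=ab+ba$ the anti-commutator. *)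

theory Defs
  imports Main "HOL.Modules"
begin

definition comm :: "'a::ring \<Rightarrow> 'a \<Rightarrow> 'a" where
  "comm a b = a * b - b * a"

definition acomm :: "'a::ring \<Rightarrow> 'a \<Rightarrow> 'a" where
  "acomm a b = a * b + b * a"

text \<open>An associative (not necessarily unital) algebra over a field K of
characteristic 0: the multiplicative structure is a ring (class ring, which is
associative and non-unital), the scalar action makes it a K-module, and
multiplication is K-bilinear.\<close>
definition assoc_algebra :: "('k::field_char_0 \<Rightarrow> 'a::ring \<Rightarrow> 'a) \<Rightarrow> bool" where
  "assoc_algebra scale \<longleftrightarrow> module scale \<and>
     (\<forall>k a b. scale k (a * b) = scale k a * b) \<and>
     (\<forall>k a b. scale k (a * b) = a * scale k b)"

definition third_type :: "('k::field_char_0 \<Rightarrow> 'a::ring \<Rightarrow> 'a) \<Rightarrow> bool" where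
  "third_type scale \<longleftrightarrow> assoc_algebra scale \<and>
     (\<forall>a b c::'a. a*b*c + b*a*c - b*c*a - c*b*a = 0)"

end

theory Submission
  imports Defs
begin

text \<open>If 2 is invertible, the third-type identity makes every product of four elements
invariant under all permutations of its factors: each adjacent transposition of the factors
is (twice, for the last two factors) an integer combination of instances of the identity,
multiplied on either side or with a product substituted for one argument.  Each of the twelve
brackets then expands into products of \<open>a, b, c, d\<close> whose coefficients sum to zero,
since every bracket contains a commutator.\<close>

definition third_type_defect :: "'a::ring \<Rightarrow> 'a \<Rightarrow> 'a \<Rightarrow> 'a" where
  "third_type_defect x y z = x*y*z + y*x*z - y*z*x - z*y*x"

lemma module_add_self_eq_zero:
  fixes scale :: "'k::field_char_0 \<Rightarrow> 'a::ab_group_add \<Rightarrow> 'a"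
    and x :: 'a
  assumes "module scale" and "x + x = 0"
  shows "x = 0"
proof -
  interpret module scale by fact
  have "x = scale (1/2 + 1/2) x"
    by simp
  also have "\<dots> = scale (1/2) (x + x)"
    by (simp only: scale_left_distrib scale_right_distrib)
  finally show ?thesis
    using \<open>x + x = 0\<close> by simp
qed

context
  assumes third_type: "\<And>x y z :: 'a::ring. third_type_defect x y z = 0"
    and two_torsion_free: "\<And>x :: 'a. x + x = 0 \<Longrightarrow> x = 0"
begin

lemma product4_swap_34: "a * b * c * d = a * b * d * (c :: 'a)"
proof -
  have "(a*b*c*d - a*b*d*c) + (a*b*c*d - a*b*d*c) =
      third_type_defect b a c * d - third_type_defect b a d * c - b * third_type_defect c a d
      + third_type_defect (b*c) a d - third_type_defect (b*d) a c"
    by (simp add: third_type_defect_def algebra_simps)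
  also have "\<dots> = 0"
    by (simp add: third_type)
  finally show ?thesis
    using two_torsion_free[of "a*b*c*d - a*b*d*c"] by simp
qed

lemma product4_swap_23: "a * b * c * d = a * c * b * (d :: 'a)"
proof -
  have "a*b*c*d - a*c*b*d = third_type_defect (a*b) c d - third_type_defect a c d * b
      - (a*c*b*d - a*c*d*b) - (c*a*b*d - c*a*d*b)"
    by (simp add: third_type_defect_def algebra_simps)
  also have "\<dots> = 0"
    by (simp add: third_type product4_swap_34)
  finally show ?thesis
    by simp
qed

lemma product4_swap_12: "a * b * c * d = b * a * c * (d :: 'a)"
proof -
  have "a*b*c*d - b*a*c*d = third_type_defect (a*b) c d - third_type_defect b (c*a) d
      - (b*a*c*d - b*c*a*d) - (c*a*d*b - c*d*a*b)"
    by (simp add: third_type_defect_def algebra_simps)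
  also have "\<dots> = 0"
    by (simp add: third_type product4_swap_23)
  finally show ?thesis
    by simp
qed

text \<open>In right-associated form these are permutative rewrite rules, so the simplifier uses
them for ordered rewriting and thereby brings every product of four factors into one sorted
normal form.\<close>
lemmas product4_swaps_right_assoc =
  product4_swap_12[unfolded mult.assoc]
  product4_swap_23[unfolded mult.assoc]
  product4_swap_34[unfolded mult.assoc]

end

theorem mainTheorem5:
  fixes scale :: "'k::field_char_0 \<Rightarrow> 'a::ring \<Rightarrow> 'a"
  assumes "third_type scale"
  shows "\<forall>a b c d :: 'a.
    comm (comm a b) (comm c d) = 0 \<and>
    comm (comm a b) (acomm c d) = 0 \<and>
    comm (acomm a b) (acomm c d) = 0 \<and>
    acomm (acomm a b) (comm c d) = 0 \<and>
    acomm (comm a b) (comm c d) = 0 \<and>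
    comm (comm (comm a b) c) d = 0 \<and>
    acomm (comm (comm a b) c) d = 0 \<and>
    comm (acomm (comm a b) c) d = 0 \<and>
    comm (comm (acomm a b) c) d = 0 \<and>
    comm (acomm (acomm a b) c) d = 0 \<and>
    acomm (comm (acomm a b) c) d = 0 \<and>
    acomm (acomm (comm a b) c) d = 0"
proof -
  have identity: "third_type_defect x y z = 0" for x y z :: 'a
    using assms unfolding third_type_def third_type_defect_def by blast
  have "module scale"
    using assms unfolding third_type_def assoc_algebra_def by blast
  note product4_swaps_right_assoc[OF identity module_add_self_eq_zero[OF this]]
  then show ?thesis
    unfolding comm_def acomm_def by (simp add: algebra_simps)
qed

end
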